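(* Let $L$ be a Hausdorff co-Heyting algebra and $I$ an ideal of $L$. The quotient co-Heyting algebra $L/I$ is Hausdorff if and only if $I$ is closed in the codimetric topology of $L$. In particular, the quotient of a Hausdorff co-Heyting algebra by a principal ideal is Hausdorff.
   Context: A co-Heyting algebra is a bounded distributive lattice $(L,0,1,\vee,\wedge)$ such that $a-b=\min\{c\in L: a\le b\vee c\}$ exists for all $a,b$. Let $a\triangle b=(a-b)\vee(b-a)$; for an ideal $I$, $L/I$ is the quotient by the congruence $a\equiv_I b\iff a\triangle b\in I$, itself a co-Heyting algebra. $\operatorname{Spec}L$ is the set of prime filters ordered by inclusion; the height of a prime filter is its foundation rank there; $\operatorname{codim}_L a=\min\{\operatorname{height}\mathfrak p: a\in\mathfrak p\in\operatorname{Spec}L\}$ ($+\infty$ if none). The codimetric pseudometric is $\operatorname{dist}_L(a,b)=2^{-\operatorname{codim}_L(a\triangle b)}$ if $\operatorname{codim}_L(a\triangle b)$ is finite and $0$ otherwise; the codimetric topology is the topology it defines. $L$ is called Hausdorff if its codimetric topology is Hausdorff, equivalently if every nonzero element of $L$ has finite codimension. *)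

theory Defs
  imports Main "HOL-Library.Extended_Nat"
begin

class coheyting = bounded_lattice + distrib_lattice + minus +
  assumes le_sup_diff: "a \<le> sup b (a - b)"
  and diff_least: "a \<le> sup b c \<Longrightarrow> a - b \<le> c"

text \<open>Carrier-based co-Heyting algebra structures (needed for quotients).\<close>

record 'a cha =
  ch_car :: "'a set"
  ch_join :: "'a \<Rightarrow> 'a \<Rightarrow> 'a"
  ch_meet :: "'a \<Rightarrow> 'a \<Rightarrow> 'a"
  ch_zero :: 'a
  ch_one :: 'a
  ch_diff :: "'a \<Rightarrow> 'a \<Rightarrow> 'a"

definition ch_le :: "'a cha \<Rightarrow> 'a \<Rightarrow> 'a \<Rightarrow> bool" where
  "ch_le S a b \<longleftrightarrow> ch_join S a b = b"

definition ch_symdiff :: "'a cha \<Rightarrow> 'a \<Rightarrow> 'a \<Rightarrow> 'a" where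
  "ch_symdiff S a b = ch_join S (ch_diff S a b) (ch_diff S b a)"

definition prime_filter :: "'a cha \<Rightarrow> 'a set \<Rightarrow> bool" where
  "prime_filter S p \<longleftrightarrow> p \<subseteq> ch_car S \<and> ch_one S \<in> p \<and> ch_zero S \<notin> p
     \<and> (\<forall>a\<in>p. \<forall>b\<in>ch_car S. ch_le S a b \<longrightarrow> b \<in> p)
     \<and> (\<forall>a\<in>p. \<forall>b\<in>p. ch_meet S a b \<in> p)
     \<and> (\<forall>a\<in>ch_car S. \<forall>b\<in>ch_car S. ch_join S a b \<in> p \<longrightarrow> a \<in> p \<or> b \<in> p)"

definition Spec :: "'a cha \<Rightarrow> 'a set set" where
  "Spec S = {p. prime_filter S p}"

text \<open>height_le S p n: the foundation rank of p in (Spec S, \<subseteq>) is at most n.\<close>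

fun height_le :: "'a cha \<Rightarrow> 'a set \<Rightarrow> nat \<Rightarrow> bool" where
  "height_le S p 0 = (\<forall>q\<in>Spec S. \<not> q \<subset> p)"
| "height_le S p (Suc n) = (\<forall>q\<in>Spec S. q \<subset> p \<longrightarrow> height_le S q n)"

definition height :: "'a cha \<Rightarrow> 'a set \<Rightarrow> enat" where
  "height S p = (if \<exists>n. height_le S p n then enat (LEAST n. height_le S p n) else \<infinity>)"

definition codim :: "'a cha \<Rightarrow> 'a \<Rightarrow> enat" where
  "codim S a = (INF p\<in>{p\<in>Spec S. a \<in> p}. height S p)"

definition cdist :: "'a cha \<Rightarrow> 'a \<Rightarrow> 'a \<Rightarrow> real" where
  "cdist S a b = (case codim S (ch_symdiff S a b) of enat n \<Rightarrow> (1/2) ^ n | \<infinity> \<Rightarrow> 0)"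

definition codim_open :: "'a cha \<Rightarrow> 'a set \<Rightarrow> bool" where
  "codim_open S U \<longleftrightarrow> U \<subseteq> ch_car S \<and>
     (\<forall>x\<in>U. \<exists>e>0. \<forall>y\<in>ch_car S. cdist S x y < e \<longrightarrow> y \<in> U)"

definition codim_closed :: "'a cha \<Rightarrow> 'a set \<Rightarrow> bool" where
  "codim_closed S A \<longleftrightarrow> A \<subseteq> ch_car S \<and> codim_open S (ch_car S - A)"

definition codim_Hausdorff :: "'a cha \<Rightarrow> bool" where
  "codim_Hausdorff S \<longleftrightarrow> (\<forall>x\<in>ch_car S. \<forall>y\<in>ch_car S. x \<noteq> y \<longrightarrow>
     (\<exists>U V. codim_open S U \<and> codim_open S V \<and> x \<in> U \<and> y \<in> V \<and> U \<inter> V = {}))"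

definition full_cha :: "'a::coheyting cha" where
  "full_cha = \<lparr>ch_car = UNIV, ch_join = sup, ch_meet = inf, ch_zero = bot, ch_one = top,
               ch_diff = (-)\<rparr>"

definition cha_ideal :: "'a::coheyting set \<Rightarrow> bool" where
  "cha_ideal I \<longleftrightarrow> bot \<in> I \<and> (\<forall>a\<in>I. \<forall>b. b \<le> a \<longrightarrow> b \<in> I) \<and> (\<forall>a\<in>I. \<forall>b\<in>I. sup a b \<in> I)"

definition symdiff :: "'a::coheyting \<Rightarrow> 'a \<Rightarrow> 'a" where
  "symdiff a b = sup (a - b) (b - a)"

definition qclass :: "'a::coheyting set \<Rightarrow> 'a \<Rightarrow> 'a set" where
  "qclass I a = {b. symdiff a b \<in> I}"

text \<open>L/I: classes of the congruence, with operations computed on representatives.\<close>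

definition quot_cha :: "'a::coheyting set \<Rightarrow> 'a set cha" where
  "quot_cha I = \<lparr>ch_car = range (qclass I),
     ch_join = (\<lambda>X Y. qclass I (sup (SOME a. a \<in> X) (SOME b. b \<in> Y))),
     ch_meet = (\<lambda>X Y. qclass I (inf (SOME a. a \<in> X) (SOME b. b \<in> Y))),
     ch_zero = qclass I bot, ch_one = qclass I top,
     ch_diff = (\<lambda>X Y. qclass I ((SOME a. a \<in> X) - (SOME b. b \<in> Y)))\<rparr>"

end

theory Submission
  imports Defs
begin

text \<open>
  Heights of prime filters are witnessed by elements: some prime filter strictly below P contains d
  iff x \<sqinter> (d - x) \<in> P for some x. Iterating, "height P \<le> n" means that P avoids a certain
  set W(n+1) of elements, all of codimension > n, and the elements of codimension > n form an
  ideal K(n). The prime filters of L/I are the images of the prime filters of L avoiding I; these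
  form a down-closed family, so heights are preserved, and L/I is Hausdorff iff every z \<notin> I lies in
  a prime filter of finite height avoiding I.

  Such a filter P, of height n, contains z - b \<le> z \<triangle> b for every b \<in> I, which bounds
  codim (z \<triangle> b) by n uniformly in b: this is closedness of I. Conversely, if
  codim (z \<triangle> b) \<le> n for all b \<in> I, then z is not below i \<squnion> k with i \<in> I, k \<in> K(n), because
  z \<triangle> (z \<sqinter> i) \<le> z - i \<le> k. The prime filter theorem separates z from the ideal generated by
  I and K(n), giving a prime filter avoiding I and W(n+1), hence of height \<le> n. A principal
  ideal \<down>a is closed because z - a \<le> z \<triangle> b for b \<le> a, and z - a \<noteq> 0 has finite codimension.
\<close>

unbundle lattice_syntax

section \<open>Co-Heyting arithmetic\<close>

lemma diff_le_iff: "(a::'a::coheyting) - b \<le> c \<longleftrightarrow> a \<le> b \<squnion> c"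
  by (meson diff_least le_sup_diff order_trans sup_mono order_refl)

lemma diff_antimono_right: "(b::'a::coheyting) \<le> b' \<Longrightarrow> a - b' \<le> a - b"
  unfolding diff_le_iff using le_sup_diff[of a b] by (meson order_trans sup_mono order_refl)

lemma diff_bot [simp]: "(a::'a::coheyting) - \<bottom> = a"
  by (metis antisym diff_le_iff le_sup_diff order_refl sup_bot_left)

lemma diff_self [simp]: "(a::'a::coheyting) - a = \<bottom>"
  by (metis bot_unique diff_le_iff order_refl sup_bot_right)

lemma bot_diff [simp]: "\<bottom> - (a::'a::coheyting) = \<bottom>"
  by (metis bot_unique diff_le_iff bot_least sup_bot_right)

lemma diff_triangle: "(a::'a::coheyting) - c \<le> (a - b) \<squnion> (b - c)"
proof -
  have "a \<le> b \<squnion> (a - b)" by (rule le_sup_diff)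
  also have "\<dots> \<le> (c \<squnion> (b - c)) \<squnion> (a - b)" by (rule sup_mono[OF le_sup_diff order_refl])
  also have "\<dots> = c \<squnion> ((a - b) \<squnion> (b - c))" by (simp add: ac_simps)
  finally show ?thesis by (simp add: diff_le_iff)
qed

lemma sup_diff_sup_le: "((x::'a::coheyting) \<squnion> y) - (x' \<squnion> y') \<le> (x - x') \<squnion> (y - y')"
proof -
  have "x \<squnion> y \<le> (x' \<squnion> (x - x')) \<squnion> (y' \<squnion> (y - y'))" by (rule sup_mono; rule le_sup_diff)
  also have "\<dots> = (x' \<squnion> y') \<squnion> ((x - x') \<squnion> (y - y'))" by (simp add: ac_simps)
  finally show ?thesis by (simp add: diff_le_iff)
qed

lemma inf_diff_inf_le: "((x::'a::coheyting) \<sqinter> y) - (x' \<sqinter> y') \<le> (x - x') \<squnion> (y - y')"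
proof -
  let ?D = "(x - x') \<squnion> (y - y')"
  have "x \<le> x' \<squnion> ?D" "y \<le> y' \<squnion> ?D"
    using le_sup_diff[of x x'] le_sup_diff[of y y']
    by (meson order_trans sup_mono sup_ge1 sup_ge2 order_refl)+
  then have "x \<sqinter> y \<le> (x' \<squnion> ?D) \<sqinter> (y' \<squnion> ?D)" by (rule inf_mono)
  also have "\<dots> = (x' \<sqinter> y') \<squnion> ?D" by (simp add: sup_inf_distrib2)
  finally show ?thesis by (simp add: diff_le_iff)
qed

lemma diff_diff_diff_le: "((x::'a::coheyting) - y) - (x' - y') \<le> (x - x') \<squnion> (y' - y)"
proof -
  have "x \<le> x' \<squnion> (x - x')" by (rule le_sup_diff)
  also have "\<dots> \<le> (y' \<squnion> (x' - y')) \<squnion> (x - x')" by (rule sup_mono[OF le_sup_diff order_refl])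
  also have "\<dots> \<le> ((y \<squnion> (y' - y)) \<squnion> (x' - y')) \<squnion> (x - x')"
    by (rule sup_mono[OF sup_mono[OF le_sup_diff order_refl] order_refl])
  also have "\<dots> = y \<squnion> ((x' - y') \<squnion> ((x - x') \<squnion> (y' - y)))" by (simp add: ac_simps)
  finally show ?thesis by (simp add: diff_le_iff)
qed

lemma symdiff_commute: "symdiff x y = symdiff y x"
  by (simp add: symdiff_def sup_commute)

lemma symdiff_self [simp]: "symdiff x x = \<bottom>"
  by (simp add: symdiff_def)

lemma symdiff_bot [simp]: "symdiff x \<bottom> = x"
  by (simp add: symdiff_def)

lemma diff_le_symdiff: "a - b \<le> symdiff a b"
  by (simp add: symdiff_def)

lemma symdiff_le_iff: "symdiff x y \<le> c \<longleftrightarrow> x - y \<le> c \<and> y - x \<le> c"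
  by (simp add: symdiff_def)

lemma symdiff_triangle: "symdiff (x::'a::coheyting) z \<le> symdiff x y \<squnion> symdiff y z"
  unfolding symdiff_le_iff
  by (rule conjI; rule order_trans[OF diff_triangle[where b = y]])
    (simp_all add: symdiff_def le_supI1 le_supI2)

lemma symdiff_sup_sup_le:
  "symdiff ((x::'a::coheyting) \<squnion> y) (x' \<squnion> y') \<le> symdiff x x' \<squnion> symdiff y y'"
  unfolding symdiff_le_iff
  by (rule conjI; rule order_trans[OF sup_diff_sup_le])
    (simp_all add: symdiff_def le_supI1 le_supI2)

lemma symdiff_inf_inf_le:
  "symdiff ((x::'a::coheyting) \<sqinter> y) (x' \<sqinter> y') \<le> symdiff x x' \<squnion> symdiff y y'"
  unfolding symdiff_le_iff
  by (rule conjI; rule order_trans[OF inf_diff_inf_le])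
    (simp_all add: symdiff_def le_supI1 le_supI2)

lemma symdiff_diff_diff_le:
  "symdiff ((x::'a::coheyting) - y) (x' - y') \<le> symdiff x x' \<squnion> symdiff y y'"
  unfolding symdiff_le_iff
  by (rule conjI; rule order_trans[OF diff_diff_diff_le])
    (simp_all add: symdiff_def le_supI1 le_supI2)

lemma symdiff_inf_le_diff: "symdiff (z::'a::coheyting) (z \<sqinter> b) \<le> z - b"
proof -
  have "z \<le> (z \<sqinter> b) \<squnion> (z - b)"
    using le_sup_diff[of z b] by (simp add: sup_inf_distrib2)
  then show ?thesis by (simp add: symdiff_def diff_le_iff le_supI1)
qed

section \<open>Prime filters\<close>

definition is_prime_filter :: "'a::coheyting set \<Rightarrow> bool" where
  "is_prime_filter P \<longleftrightarrow> \<top> \<in> P \<and> \<bottom> \<notin> P \<and> (\<forall>a\<in>P. \<forall>b. a \<le> b \<longrightarrow> b \<in> P)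
     \<and> (\<forall>a\<in>P. \<forall>b\<in>P. a \<sqinter> b \<in> P) \<and> (\<forall>a b. a \<squnion> b \<in> P \<longrightarrow> a \<in> P \<or> b \<in> P)"

lemma prime_filter_top: "is_prime_filter P \<Longrightarrow> \<top> \<in> P"
  and prime_filter_bot: "is_prime_filter P \<Longrightarrow> \<bottom> \<notin> P"
  and prime_filter_up: "is_prime_filter P \<Longrightarrow> a \<in> P \<Longrightarrow> a \<le> b \<Longrightarrow> b \<in> P"
  and prime_filter_inf: "is_prime_filter P \<Longrightarrow> a \<in> P \<Longrightarrow> b \<in> P \<Longrightarrow> a \<sqinter> b \<in> P"
  and prime_filter_supD: "is_prime_filter P \<Longrightarrow> a \<squnion> b \<in> P \<Longrightarrow> a \<in> P \<or> b \<in> P"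
  by (auto simp: is_prime_filter_def)

lemma prime_filter_diff: "is_prime_filter P \<Longrightarrow> a \<in> P \<Longrightarrow> b \<notin> P \<Longrightarrow> a - b \<in> P"
  by (metis le_sup_diff prime_filter_supD prime_filter_up)

lemma prime_filter_symdiff_triangle:
  "is_prime_filter P \<Longrightarrow> symdiff x z \<in> P \<Longrightarrow> symdiff x y \<in> P \<or> symdiff y z \<in> P"
  by (meson prime_filter_supD prime_filter_up symdiff_triangle)

lemma prime_filter_full_cha_iff:
  "prime_filter (full_cha :: 'a::coheyting cha) P \<longleftrightarrow> is_prime_filter P"
  by (simp add: prime_filter_def full_cha_def ch_le_def is_prime_filter_def le_iff_sup)

lemma Spec_full_cha: "Spec (full_cha :: 'a::coheyting cha) = {P. is_prime_filter P}"
  by (simp add: Spec_def prime_filter_full_cha_iff)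

lemma cha_idealD:
  "cha_ideal I \<Longrightarrow> \<bottom> \<in> I"
  "cha_ideal I \<Longrightarrow> y \<in> I \<Longrightarrow> x \<le> y \<Longrightarrow> x \<in> I"
  "cha_ideal I \<Longrightarrow> x \<in> I \<Longrightarrow> y \<in> I \<Longrightarrow> x \<squnion> y \<in> I"
  by (auto simp: cha_ideal_def)

lemma cha_ideal_principal: "cha_ideal {x. x \<le> a}"
  by (auto simp: cha_ideal_def)

lemma cha_ideal_compl_prime_filter: "is_prime_filter P \<Longrightarrow> cha_ideal (- P)"
  by (auto simp: cha_ideal_def is_prime_filter_def)

lemma cha_ideal_join:
  assumes "cha_ideal I" "cha_ideal J"
  shows "cha_ideal {x. \<exists>i\<in>I. \<exists>j\<in>J. x \<le> i \<squnion> j}" (is "cha_ideal ?K")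
  unfolding cha_ideal_def
proof (intro conjI ballI allI impI)
  show "\<bottom> \<in> ?K" using assms by (auto dest: cha_idealD)
next
  fix x y assume "x \<in> ?K" "y \<le> x"
  then show "y \<in> ?K" by (auto intro: order_trans)
next
  fix x y assume "x \<in> ?K" "y \<in> ?K"
  then obtain i i' j j' where "i \<in> I" "i' \<in> I" "j \<in> J" "j' \<in> J" "x \<le> i \<squnion> j" "y \<le> i' \<squnion> j'"
    by blast
  moreover have "x \<squnion> y \<le> (i \<squnion> i') \<squnion> (j \<squnion> j')" if "x \<le> i \<squnion> j" "y \<le> i' \<squnion> j'"
    using sup_mono[OF that] by (simp add: ac_simps)
  ultimately show "x \<squnion> y \<in> ?K" using assms by (blast dest: cha_idealD)
qed

lemma cha_ideal_Union_chain:
  assumes "C \<noteq> {}" "subset.chain {K. cha_ideal K} C"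
  shows "cha_ideal (\<Union>C)"
  unfolding cha_ideal_def
proof (intro conjI ballI allI impI)
  show "\<bottom> \<in> \<Union>C" using assms unfolding subset.chain_def cha_ideal_def by blast
next
  fix x y assume "x \<in> \<Union>C" "y \<le> x"
  then show "y \<in> \<Union>C" using assms(2) by (auto simp: subset.chain_def dest: cha_idealD)
next
  fix x y assume "x \<in> \<Union>C" "y \<in> \<Union>C"
  then obtain K where "K \<in> C" "x \<in> K" "y \<in> K"
    using assms(2) unfolding subset.chain_def by blast
  then show "x \<squnion> y \<in> \<Union>C" using assms(2) by (auto simp: subset.chain_def dest: cha_idealD)
qed

lemma exists_maximal_ideal_avoiding:
  fixes J :: "'a::coheyting set"
  assumes "cha_ideal J" "a \<notin> J"
  obtains M where "cha_ideal M" "J \<subseteq> M" "a \<notin> M"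
    "\<And>K. cha_ideal K \<Longrightarrow> M \<subseteq> K \<Longrightarrow> a \<notin> K \<Longrightarrow> K = M"
proof -
  let ?A = "{K. cha_ideal K \<and> J \<subseteq> K \<and> a \<notin> K}"
  have "\<exists>M\<in>?A. \<forall>K\<in>?A. M \<subseteq> K \<longrightarrow> K = M"
  proof (rule subset_Zorn_nonempty)
    show "?A \<noteq> {}" using assms by blast
  next
    fix C assume C: "C \<noteq> {}" "subset.chain ?A C"
    then have "C \<subseteq> ?A" "subset.chain {K. cha_ideal K} C"
      by (auto simp: subset.chain_def)
    then show "\<Union>C \<in> ?A"
      using cha_ideal_Union_chain[OF C(1)] C(1) by blast
  qed
  then obtain M where "M \<in> ?A" "\<forall>K\<in>?A. M \<subseteq> K \<longrightarrow> K = M" ..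
  then show ?thesis by (intro that) blast+
qed

lemma prime_filter_compl_maximal_ideal:
  fixes M :: "'a::coheyting set"
  assumes M: "cha_ideal M" "a \<notin> M"
    and max: "\<And>K. cha_ideal K \<Longrightarrow> M \<subseteq> K \<Longrightarrow> a \<notin> K \<Longrightarrow> K = M"
  shows "is_prime_filter (- M)"
proof -
  have cover: "\<exists>m\<in>M. a \<le> m \<squnion> x" if x: "x \<notin> M" for x
  proof -
    let ?K = "{y. \<exists>m\<in>M. \<exists>z\<in>{z. z \<le> x}. y \<le> m \<squnion> z}"
    have "M \<subseteq> ?K" "x \<in> ?K" using cha_idealD(1)[OF M(1)] by force+
    with x have "a \<in> ?K"
      using max[OF cha_ideal_join[OF M(1) cha_ideal_principal]] by blast
    then obtain m z where "m \<in> M" "z \<le> x" "a \<le> m \<squnion> z" by blast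
    then show ?thesis by (meson order_trans sup_mono order_refl)
  qed
  have down: "y \<le> x \<Longrightarrow> x \<in> M \<Longrightarrow> y \<in> M" for x y
    using cha_idealD(2)[OF M(1)] .
  show ?thesis unfolding is_prime_filter_def
  proof (intro conjI ballI allI impI)
    show "\<top> \<in> - M" using M(2) down[OF top_greatest] by blast
    show "\<bottom> \<notin> - M" using cha_idealD(1)[OF M(1)] by blast
  next
    fix x y assume "x \<in> - M" "x \<le> y" then show "y \<in> - M" using down by blast
  next
    fix x y assume "x \<in> - M" "y \<in> - M"
    then obtain m m' where m: "m \<in> M" "m' \<in> M" "a \<le> m \<squnion> x" "a \<le> m' \<squnion> y"
      using cover by (meson ComplD)
    then have "a \<le> ((m \<squnion> m') \<squnion> x) \<sqinter> ((m \<squnion> m') \<squnion> y)"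
      by (meson le_infI le_supI le_supI1 le_supI2 order_trans sup_ge1 sup_ge2)
    also have "\<dots> = (m \<squnion> m') \<squnion> (x \<sqinter> y)" by (simp add: sup_inf_distrib1)
    finally have "a \<le> (m \<squnion> m') \<squnion> (x \<sqinter> y)" .
    then show "x \<sqinter> y \<in> - M"
      using M m cha_idealD(3)[OF M(1)] down by blast
  next
    fix x y assume "x \<squnion> y \<in> - M" then show "x \<in> - M \<or> y \<in> - M"
      using cha_idealD(3)[OF M(1)] by blast
  qed
qed

theorem prime_filter_separation:
  fixes J :: "'a::coheyting set"
  assumes "cha_ideal J" "a \<notin> J"
  obtains P where "is_prime_filter P" "a \<in> P" "P \<inter> J = {}"
proof -
  obtain M where "cha_ideal M" "J \<subseteq> M" "a \<notin> M"
    "\<And>K. cha_ideal K \<Longrightarrow> M \<subseteq> K \<Longrightarrow> a \<notin> K \<Longrightarrow> K = M"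
    using exists_maximal_ideal_avoiding[OF assms] by blast
  then show ?thesis using that[of "- M"] prime_filter_compl_maximal_ideal by blast
qed

section \<open>Heights and codimension\<close>

lemma height_le_Suc: "height_le S p n \<Longrightarrow> height_le S p (Suc n)"
  by (induction n arbitrary: p) auto

lemma height_le_mono:
  assumes "height_le S p n" "n \<le> m"
  shows "height_le S p m"
  using assms(2) by (induction m rule: dec_induct) (use assms(1) height_le_Suc in blast)+

lemma height_le_iff: "height S p \<le> enat n \<longleftrightarrow> height_le S p n"
proof
  assume h: "height S p \<le> enat n"
  then have ex: "\<exists>m. height_le S p m" by (auto simp: height_def split: if_splits)
  with h have "(LEAST m. height_le S p m) \<le> n" by (simp add: height_def)
  moreover have "height_le S p (LEAST m. height_le S p m)" using ex by (rule LeastI_ex)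
  ultimately show "height_le S p n" using height_le_mono by blast
next
  assume "height_le S p n"
  then show "height S p \<le> enat n" by (auto simp: height_def intro: Least_le)
qed

lemma codim_le_iff: "codim S a \<le> enat n \<longleftrightarrow> (\<exists>p\<in>Spec S. a \<in> p \<and> height_le S p n)"
proof
  assume h: "codim S a \<le> enat n"
  let ?H = "height S ` {p\<in>Spec S. a \<in> p}"
  have "?H \<noteq> {}"
  proof
    assume "?H = {}"
    then have "codim S a = \<infinity>" by (simp add: codim_def Inf_enat_def)
    with h show False by simp
  qed
  then have "Inf ?H \<in> ?H" unfolding Inf_enat_def by (auto intro: LeastI)
  then obtain p where "p \<in> Spec S" "a \<in> p" "height S p = codim S a" by (auto simp: codim_def)
  with h show "\<exists>p\<in>Spec S. a \<in> p \<and> height_le S p n" by (metis height_le_iff)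
next
  assume "\<exists>p\<in>Spec S. a \<in> p \<and> height_le S p n"
  then obtain p where "p \<in> Spec S" "a \<in> p" "height_le S p n" by blast
  then have "codim S a \<le> height S p" unfolding codim_def by (auto intro: INF_lower)
  also have "\<dots> \<le> enat n" using \<open>height_le S p n\<close> height_le_iff by blast
  finally show "codim S a \<le> enat n" .
qed

lemma codim_finite_iff: "codim S a \<noteq> \<infinity> \<longleftrightarrow> (\<exists>p\<in>Spec S. a \<in> p \<and> (\<exists>n. height_le S p n))"
proof -
  have "codim S a \<noteq> \<infinity> \<longleftrightarrow> (\<exists>n. codim S a \<le> enat n)"
    by (cases "codim S a") auto
  then show ?thesis by (auto simp: codim_le_iff)
qed

lemma codim_eq_infinity: "\<forall>p\<in>Spec S. a \<notin> p \<Longrightarrow> codim S a = \<infinity>"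
  by (simp add: codim_def Inf_enat_def)

lemma codim_min_le:
  assumes "\<forall>p\<in>Spec S. c \<in> p \<longrightarrow> a \<in> p \<or> b \<in> p"
  shows "min (codim S a) (codim S b) \<le> codim S c"
  unfolding codim_def
proof (rule INF_greatest)
  fix p assume "p \<in> {p \<in> Spec S. c \<in> p}"
  with assms have "a \<in> p \<or> b \<in> p" by auto
  with \<open>p \<in> {p \<in> Spec S. c \<in> p}\<close>
  show "min (INF p\<in>{p \<in> Spec S. a \<in> p}. height S p) (INF p\<in>{p \<in> Spec S. b \<in> p}. height S p)
      \<le> height S p"
    by (auto intro: min.coboundedI1 min.coboundedI2 INF_lower)
qed

lemma codim_full_cha_le_iff:
  "codim (full_cha :: 'a::coheyting cha) a \<le> enat n
     \<longleftrightarrow> (\<exists>P. is_prime_filter P \<and> a \<in> P \<and> height_le full_cha P n)"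
  by (simp add: codim_le_iff Spec_full_cha)

lemma codim_full_cha_antimono:
  "(x::'a::coheyting) \<le> y \<Longrightarrow> codim (full_cha :: 'a cha) y \<le> codim full_cha x"
  unfolding codim_def Spec_full_cha by (rule INF_superset_mono) (auto intro: prime_filter_up)

text \<open>The sets W(n) of the introduction.\<close>

fun rank_witness :: "nat \<Rightarrow> 'a::coheyting set" where
  "rank_witness 0 = {\<top>}"
| "rank_witness (Suc k) = {x \<sqinter> (d - x) | d x. d \<in> rank_witness k}"

lemma exists_prime_filter_below_iff:
  fixes P :: "'a::coheyting set"
  assumes P: "is_prime_filter P"
  shows "(\<exists>Q. is_prime_filter Q \<and> Q \<subset> P \<and> d \<in> Q) \<longleftrightarrow> (\<exists>x. x \<sqinter> (d - x) \<in> P)"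
proof
  assume "\<exists>Q. is_prime_filter Q \<and> Q \<subset> P \<and> d \<in> Q"
  then obtain Q x where "is_prime_filter Q" "Q \<subseteq> P" "d \<in> Q" "x \<in> P" "x \<notin> Q" by blast
  then show "\<exists>x. x \<sqinter> (d - x) \<in> P" by (metis P prime_filter_diff prime_filter_inf subsetD)
next
  assume "\<exists>x. x \<sqinter> (d - x) \<in> P"
  then obtain x where "x \<sqinter> (d - x) \<in> P" by blast
  then have x: "x \<in> P" "d - x \<in> P" using P by (auto intro: prime_filter_up)
  let ?J = "{y. \<exists>u\<in>- P. \<exists>z\<in>{z. z \<le> x}. y \<le> u \<squnion> z}"
  have "d \<notin> ?J"
  proof
    assume "d \<in> ?J"
    then obtain u z where "u \<notin> P" "z \<le> x" "d \<le> u \<squnion> z" by blast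
    then have "d - x \<le> u"
      by (metis diff_le_iff le_sup_iff order_trans sup_commute sup_ge1 sup_ge2)
    then show False using x \<open>u \<notin> P\<close> P prime_filter_up by blast
  qed
  then obtain Q where Q: "is_prime_filter Q" "d \<in> Q" "Q \<inter> ?J = {}"
    using prime_filter_separation[OF cha_ideal_join[OF cha_ideal_compl_prime_filter[OF P]
        cha_ideal_principal]] by blast
  have "- P \<subseteq> ?J" "x \<in> ?J" using prime_filter_bot[OF P] by force+
  with Q x show "\<exists>Q. is_prime_filter Q \<and> Q \<subset> P \<and> d \<in> Q" by blast
qed

lemma height_le_full_cha_iff:
  "is_prime_filter P \<Longrightarrow> height_le full_cha P n \<longleftrightarrow> P \<inter> rank_witness (Suc n) = {}"
proof (induction n arbitrary: P)
  case 0
  have "height_le full_cha P 0 \<longleftrightarrow> \<not> (\<exists>Q. is_prime_filter Q \<and> Q \<subset> P \<and> \<top> \<in> Q)"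
    using prime_filter_top by (auto simp: Spec_full_cha)
  also have "\<dots> \<longleftrightarrow> \<not> (\<exists>x. x \<sqinter> (\<top> - x) \<in> P)" using exists_prime_filter_below_iff[OF 0] by blast
  finally show ?case by auto
next
  case (Suc n)
  have "height_le full_cha P (Suc n)
      \<longleftrightarrow> \<not> (\<exists>d\<in>rank_witness (Suc n). \<exists>Q. is_prime_filter Q \<and> Q \<subset> P \<and> d \<in> Q)"
    using Suc.IH by (auto simp: Spec_full_cha simp del: rank_witness.simps)
  also have "\<dots> \<longleftrightarrow> \<not> (\<exists>d\<in>rank_witness (Suc n). \<exists>x. x \<sqinter> (d - x) \<in> P)"
    using exists_prime_filter_below_iff[OF Suc.prems] by blast
  also have "\<dots> \<longleftrightarrow> P \<inter> rank_witness (Suc (Suc n)) = {}"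
    by (simp only: rank_witness.simps(2)[of "Suc n"]) blast
  finally show ?case .
qed

lemma codim_full_cha_greater_iff:
  "enat n < codim (full_cha :: 'a::coheyting cha) x
     \<longleftrightarrow> (\<forall>P. is_prime_filter P \<longrightarrow> height_le full_cha P n \<longrightarrow> x \<notin> P)"
  by (auto simp: not_le[symmetric] codim_full_cha_le_iff)

lemma cha_ideal_codim_greater: "cha_ideal {x::'a::coheyting. enat n < codim full_cha x}"
  unfolding cha_ideal_def codim_full_cha_greater_iff
  by (blast dest: prime_filter_bot prime_filter_up prime_filter_supD)

lemma codim_greater_rank_witness:
  "w \<in> rank_witness (Suc n) \<Longrightarrow> enat n < codim (full_cha :: 'a::coheyting cha) w"
  unfolding codim_full_cha_greater_iff using height_le_full_cha_iff by blast

section \<open>The codimetric topology\<close>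

lemma codim_greater_if_cdist_less:
  assumes "cdist S x y < (1/2) ^ n"
  shows "enat n < codim S (ch_symdiff S x y)"
proof (cases "codim S (ch_symdiff S x y)")
  case (enat m)
  with assms have "(1/2::real) ^ m < (1/2) ^ n" by (simp add: cdist_def)
  then show ?thesis using enat by simp
qed simp

lemma codim_finite_if_Hausdorff:
  assumes "codim_Hausdorff S" "u \<in> ch_car S" "v \<in> ch_car S" "u \<noteq> v"
  shows "codim S (ch_symdiff S u v) \<noteq> \<infinity>"
proof
  assume inf: "codim S (ch_symdiff S u v) = \<infinity>"
  obtain U V where UV: "codim_open S U" "codim_open S V" "u \<in> U" "v \<in> V" "U \<inter> V = {}"
    using assms unfolding codim_Hausdorff_def by blast
  obtain e where "e > 0" "\<forall>y\<in>ch_car S. cdist S u y < e \<longrightarrow> y \<in> U"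
    using UV(1,3) unfolding codim_open_def by blast
  moreover have "cdist S u v = 0" using inf by (simp add: cdist_def)
  ultimately have "v \<in> U" using assms(3) by auto
  then show False using UV by blast
qed

lemma codim_open_codim_ball:
  assumes ultra: "\<And>u v w. u \<in> ch_car S \<Longrightarrow> v \<in> ch_car S \<Longrightarrow> w \<in> ch_car S \<Longrightarrow>
      min (codim S (ch_symdiff S u v)) (codim S (ch_symdiff S v w)) \<le> codim S (ch_symdiff S u w)"
    and c: "c \<in> ch_car S"
  shows "codim_open S {y\<in>ch_car S. enat n < codim S (ch_symdiff S c y)}"
proof -
  let ?B = "{y\<in>ch_car S. enat n < codim S (ch_symdiff S c y)}"
  have "y \<in> ?B" if x: "x \<in> ?B" and y: "y \<in> ch_car S" "cdist S x y < (1/2) ^ n" for x y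
  proof -
    have "enat n < min (codim S (ch_symdiff S c x)) (codim S (ch_symdiff S x y))"
      using x codim_greater_if_cdist_less[OF y(2)] by simp
    also have "\<dots> \<le> codim S (ch_symdiff S c y)" using ultra c x y(1) by blast
    finally show "y \<in> ?B" using y(1) by blast
  qed
  then show ?thesis unfolding codim_open_def by (intro conjI ballI exI[of _ "(1/2) ^ n"]) auto
qed

lemma Hausdorff_if_codim_finite:
  assumes refl: "\<And>u. u \<in> ch_car S \<Longrightarrow> codim S (ch_symdiff S u u) = \<infinity>"
    and sym: "\<And>u v. u \<in> ch_car S \<Longrightarrow> v \<in> ch_car S \<Longrightarrow>
      codim S (ch_symdiff S u v) = codim S (ch_symdiff S v u)"
    and ultra: "\<And>u v w. u \<in> ch_car S \<Longrightarrow> v \<in> ch_car S \<Longrightarrow> w \<in> ch_car S \<Longrightarrow>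
      min (codim S (ch_symdiff S u v)) (codim S (ch_symdiff S v w)) \<le> codim S (ch_symdiff S u w)"
    and fin: "\<And>u v. u \<in> ch_car S \<Longrightarrow> v \<in> ch_car S \<Longrightarrow> u \<noteq> v \<Longrightarrow>
      codim S (ch_symdiff S u v) \<noteq> \<infinity>"
  shows "codim_Hausdorff S"
  unfolding codim_Hausdorff_def
proof (intro ballI impI)
  fix u v assume uv: "u \<in> ch_car S" "v \<in> ch_car S" "u \<noteq> v"
  then obtain n where n: "codim S (ch_symdiff S u v) = enat n"
    using fin[OF uv] by (cases "codim S (ch_symdiff S u v)") auto
  define B where "B c = {y\<in>ch_car S. enat n < codim S (ch_symdiff S c y)}" for c
  have "B u \<inter> B v = {}"
  proof (rule ccontr)
    assume "B u \<inter> B v \<noteq> {}"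
    then obtain y where y: "y \<in> ch_car S"
      "enat n < codim S (ch_symdiff S u y)" "enat n < codim S (ch_symdiff S y v)"
      using sym uv by (auto simp: B_def)
    have "enat n < min (codim S (ch_symdiff S u y)) (codim S (ch_symdiff S y v))"
      using y by simp
    also have "\<dots> \<le> codim S (ch_symdiff S u v)" using ultra uv y(1) by blast
    finally show False using n by simp
  qed
  moreover have "u \<in> B u" "v \<in> B v" using uv refl by (auto simp: B_def)
  ultimately show "\<exists>U V. codim_open S U \<and> codim_open S V \<and> u \<in> U \<and> v \<in> V \<and> U \<inter> V = {}"
    using codim_open_codim_ball[OF ultra] uv unfolding B_def by blast
qed

lemma ch_car_full_cha [simp]: "ch_car (full_cha :: 'a::coheyting cha) = UNIV"
  by (simp add: full_cha_def)

lemma ch_symdiff_full_cha [simp]: "ch_symdiff (full_cha :: 'a::coheyting cha) a b = symdiff a b"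
  by (simp add: full_cha_def ch_symdiff_def symdiff_def)

lemma codim_closed_full_cha_iff:
  "codim_closed (full_cha :: 'a::coheyting cha) I \<longleftrightarrow>
    (\<forall>a. a \<notin> I \<longrightarrow> (\<exists>n. \<forall>b\<in>I. codim (full_cha :: 'a cha) (symdiff a b) \<le> enat n))"
proof
  assume closed: "codim_closed (full_cha :: 'a cha) I"
  show "\<forall>a. a \<notin> I \<longrightarrow> (\<exists>n. \<forall>b\<in>I. codim (full_cha :: 'a cha) (symdiff a b) \<le> enat n)"
  proof (intro allI impI)
    fix a assume "a \<notin> I"
    then obtain e where e: "e > 0" "\<forall>y. cdist (full_cha :: 'a cha) a y < e \<longrightarrow> y \<notin> I"
      using closed unfolding codim_closed_def codim_open_def by auto
    obtain n where n: "(1/2::real) ^ n < e" using real_arch_pow_inv[OF e(1), of "1/2"] by auto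
    have "codim (full_cha :: 'a cha) (symdiff a b) \<le> enat n" if "b \<in> I" for b
    proof (cases "codim (full_cha :: 'a cha) (symdiff a b)")
      case (enat m)
      with e that have "e \<le> (1/2) ^ m" by (auto simp: cdist_def not_less[symmetric])
      with n have "(1/2::real) ^ n < (1/2) ^ m" by linarith
      then show ?thesis using enat by simp
    next
      case infinity
      then show ?thesis using e that by (simp add: cdist_def)
    qed
    then show "\<exists>n. \<forall>b\<in>I. codim (full_cha :: 'a cha) (symdiff a b) \<le> enat n" by blast
  qed
next
  assume bound: "\<forall>a. a \<notin> I \<longrightarrow> (\<exists>n. \<forall>b\<in>I. codim (full_cha :: 'a cha) (symdiff a b) \<le> enat n)"
  show "codim_closed (full_cha :: 'a cha) I"
    unfolding codim_closed_def codim_open_def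
  proof (intro conjI ballI)
    fix a assume "a \<in> ch_car (full_cha :: 'a cha) - I"
    then obtain n where n: "\<forall>b\<in>I. codim (full_cha :: 'a cha) (symdiff a b) \<le> enat n"
      using bound by auto
    show "\<exists>e>0. \<forall>y\<in>ch_car (full_cha :: 'a cha). cdist full_cha a y < e \<longrightarrow> y \<in> ch_car full_cha - I"
    proof (intro exI[of _ "(1/2) ^ n"] conjI ballI impI)
      fix y assume "cdist (full_cha :: 'a cha) a y < (1/2) ^ n"
      then have "enat n < codim (full_cha :: 'a cha) (symdiff a y)"
        using codim_greater_if_cdist_less by fastforce
      then show "y \<in> ch_car (full_cha :: 'a cha) - I" using n by (auto simp: not_le[symmetric])
    qed simp
  qed auto
qed

section \<open>Quotients\<close>

lemma qclass_eq_iff: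
  assumes "cha_ideal I"
  shows "qclass I x = qclass I y \<longleftrightarrow> symdiff x y \<in> I"
proof
  assume "qclass I x = qclass I y"
  moreover have "y \<in> qclass I y" using cha_idealD(1)[OF assms] by (simp add: qclass_def)
  ultimately have "y \<in> qclass I x" by simp
  then show "symdiff x y \<in> I" by (simp add: qclass_def)
next
  assume xy: "symdiff x y \<in> I"
  have yx: "symdiff y x \<in> I" using xy by (simp add: symdiff_commute)
  have "symdiff x z \<in> I \<longleftrightarrow> symdiff y z \<in> I" for z
    using cha_idealD(2)[OF assms cha_idealD(3)[OF assms xy] symdiff_triangle[of x z y]]
      cha_idealD(2)[OF assms cha_idealD(3)[OF assms yx] symdiff_triangle[of y z x]] by blast
  then show "qclass I x = qclass I y" by (auto simp: qclass_def)
qed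

lemma qclass_some:
  assumes "cha_ideal I"
  shows "qclass I (SOME a. a \<in> qclass I x) = qclass I x"
proof -
  define s where "s = (SOME a. a \<in> qclass I x)"
  have "x \<in> qclass I x" using cha_idealD(1)[OF assms] by (simp add: qclass_def)
  then have "s \<in> qclass I x" unfolding s_def by (rule someI)
  then have "symdiff s x \<in> I" by (simp add: qclass_def symdiff_commute)
  then show ?thesis unfolding s_def[symmetric] using qclass_eq_iff[OF assms] by blast
qed

lemma qclass_eq_if_symdiff_le:
  assumes "cha_ideal I" "qclass I x = qclass I x'" "qclass I y = qclass I y'"
    and "symdiff u v \<le> symdiff x x' \<squnion> symdiff y y'"
  shows "qclass I u = qclass I v"
proof -
  have "symdiff x x' \<in> I" "symdiff y y' \<in> I" using assms(2,3) qclass_eq_iff[OF assms(1)] by blast+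
  then have "symdiff u v \<in> I" using cha_idealD(2,3)[OF assms(1)] assms(4) by blast
  then show ?thesis using qclass_eq_iff[OF assms(1)] by blast
qed

lemma ch_join_quot_cha: "cha_ideal I \<Longrightarrow>
    ch_join (quot_cha I) (qclass I x) (qclass I y) = qclass I (x \<squnion> y)"
  by (simp add: quot_cha_def
      qclass_eq_if_symdiff_le[OF _ qclass_some qclass_some symdiff_sup_sup_le])

lemma ch_meet_quot_cha: "cha_ideal I \<Longrightarrow>
    ch_meet (quot_cha I) (qclass I x) (qclass I y) = qclass I (x \<sqinter> y)"
  by (simp add: quot_cha_def
      qclass_eq_if_symdiff_le[OF _ qclass_some qclass_some symdiff_inf_inf_le])

lemma ch_diff_quot_cha: "cha_ideal I \<Longrightarrow>
    ch_diff (quot_cha I) (qclass I x) (qclass I y) = qclass I (x - y)"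
  by (simp add: quot_cha_def
      qclass_eq_if_symdiff_le[OF _ qclass_some qclass_some symdiff_diff_diff_le])

lemma ch_symdiff_quot_cha: "cha_ideal I \<Longrightarrow>
    ch_symdiff (quot_cha I) (qclass I x) (qclass I y) = qclass I (symdiff x y)"
  by (simp add: ch_symdiff_def ch_diff_quot_cha ch_join_quot_cha symdiff_def)

lemma ch_le_quot_cha_iff: "cha_ideal I \<Longrightarrow>
    ch_le (quot_cha I) (qclass I x) (qclass I y) \<longleftrightarrow> qclass I (x \<squnion> y) = qclass I y"
  by (simp add: ch_le_def ch_join_quot_cha)

lemma ch_car_quot_cha: "ch_car (quot_cha I) = range (qclass I)"
  and ch_zero_quot_cha: "ch_zero (quot_cha I) = qclass I \<bottom>"
  and ch_one_quot_cha: "ch_one (quot_cha I) = qclass I \<top>"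
  by (simp_all add: quot_cha_def)

definition avoiding_prime_filters :: "'a::coheyting set \<Rightarrow> 'a set set" where
  "avoiding_prime_filters I = {P. is_prime_filter P \<and> P \<inter> I = {}}"

lemma qclass_in_image_iff:
  assumes I: "cha_ideal I" and P: "P \<in> avoiding_prime_filters I"
  shows "qclass I x \<in> qclass I ` P \<longleftrightarrow> x \<in> P"
proof
  assume "qclass I x \<in> qclass I ` P"
  then obtain y where y: "y \<in> P" "symdiff y x \<in> I"
    using qclass_eq_iff[OF I] by (metis imageE)
  have "y \<le> x \<squnion> symdiff y x"
    using le_sup_diff[of y x] diff_le_symdiff[of y x] by (meson order_trans sup_mono order_refl)
  then have "x \<squnion> symdiff y x \<in> P"
    using P y(1) prime_filter_up by (auto simp: avoiding_prime_filters_def)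
  moreover have "symdiff y x \<notin> P" using y(2) P by (auto simp: avoiding_prime_filters_def)
  ultimately show "x \<in> P" using P prime_filter_supD by (auto simp: avoiding_prime_filters_def)
qed auto

lemma prime_filter_quot_cha_image:
  assumes I: "cha_ideal I" and P: "P \<in> avoiding_prime_filters I"
  shows "prime_filter (quot_cha I) (qclass I ` P)"
proof -
  note mem = qclass_in_image_iff[OF I P]
  have pf: "is_prime_filter P" using P by (simp add: avoiding_prime_filters_def)
  show ?thesis unfolding prime_filter_def ch_car_quot_cha
  proof (intro conjI ballI impI)
    show "qclass I ` P \<subseteq> range (qclass I)" by blast
    show "ch_one (quot_cha I) \<in> qclass I ` P" "ch_zero (quot_cha I) \<notin> qclass I ` P"
      using pf
      by (simp_all add: ch_one_quot_cha ch_zero_quot_cha mem prime_filter_top prime_filter_bot)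
  next
    fix a b assume "a \<in> qclass I ` P" "b \<in> range (qclass I)" "ch_le (quot_cha I) a b"
    then obtain x y where "x \<in> P" "a = qclass I x" "b = qclass I y" "qclass I (x \<squnion> y) = qclass I y"
      by (auto simp: ch_le_quot_cha_iff[OF I])
    then show "b \<in> qclass I ` P" using pf by (metis mem prime_filter_up sup_ge1)
  next
    fix a b assume "a \<in> qclass I ` P" "b \<in> qclass I ` P"
    then show "ch_meet (quot_cha I) a b \<in> qclass I ` P"
      using pf by (auto simp: ch_meet_quot_cha[OF I] intro: prime_filter_inf)
  next
    fix a b assume "a \<in> range (qclass I)" "b \<in> range (qclass I)"
      and join: "ch_join (quot_cha I) a b \<in> qclass I ` P"
    then obtain x y where ab: "a = qclass I x" "b = qclass I y" by blast
    then have "x \<squnion> y \<in> P" using join by (simp add: ch_join_quot_cha[OF I] mem)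
    then show "a \<in> qclass I ` P \<or> b \<in> qclass I ` P"
      using ab pf prime_filter_supD by blast
  qed
qed

lemma prime_filter_quot_cha_preimage:
  assumes I: "cha_ideal I" and p: "prime_filter (quot_cha I) p"
  shows "{x. qclass I x \<in> p} \<in> avoiding_prime_filters I"
proof -
  have p': "p \<subseteq> range (qclass I)" "qclass I \<top> \<in> p" "qclass I \<bottom> \<notin> p"
    "\<And>x y. qclass I x \<in> p \<Longrightarrow> ch_le (quot_cha I) (qclass I x) (qclass I y) \<Longrightarrow> qclass I y \<in> p"
    "\<And>x y. qclass I x \<in> p \<Longrightarrow> qclass I y \<in> p \<Longrightarrow> qclass I (x \<sqinter> y) \<in> p"
    "\<And>x y. qclass I (x \<squnion> y) \<in> p \<Longrightarrow> qclass I x \<in> p \<or> qclass I y \<in> p"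
    using p by (auto simp: prime_filter_def ch_car_quot_cha ch_one_quot_cha ch_zero_quot_cha
        ch_meet_quot_cha[OF I, symmetric] ch_join_quot_cha[OF I, symmetric])
  have "is_prime_filter {x. qclass I x \<in> p}"
    unfolding is_prime_filter_def
    using p' by (auto simp: ch_le_quot_cha_iff[OF I] sup_absorb2)
  moreover have "qclass I i = qclass I \<bottom>" if "i \<in> I" for i
    using that qclass_eq_iff[OF I] by simp
  ultimately show ?thesis using p'(3) by (auto simp: avoiding_prime_filters_def)
qed

lemma Spec_quot_cha:
  assumes I: "cha_ideal I"
  shows "Spec (quot_cha I) = image (qclass I) ` avoiding_prime_filters I"
proof
  show "Spec (quot_cha I) \<subseteq> image (qclass I) ` avoiding_prime_filters I"
  proof
    fix p assume "p \<in> Spec (quot_cha I)"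
    then have p: "prime_filter (quot_cha I) p" by (simp add: Spec_def)
    then have "p = qclass I ` {x. qclass I x \<in> p}"
      by (auto simp: prime_filter_def ch_car_quot_cha)
    then show "p \<in> image (qclass I) ` avoiding_prime_filters I"
      using prime_filter_quot_cha_preimage[OF I p] by blast
  qed
  show "image (qclass I) ` avoiding_prime_filters I \<subseteq> Spec (quot_cha I)"
    using prime_filter_quot_cha_image[OF I] by (auto simp: Spec_def)
qed

lemma qclass_image_subset_iff:
  assumes I: "cha_ideal I" and P: "P \<in> avoiding_prime_filters I"
  shows "qclass I ` Q \<subseteq> qclass I ` P \<longleftrightarrow> Q \<subseteq> P"
  using qclass_in_image_iff[OF I P] by blast

lemma qclass_image_psubset_iff:
  assumes I: "cha_ideal I" and "P \<in> avoiding_prime_filters I" "Q \<in> avoiding_prime_filters I"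
  shows "qclass I ` Q \<subset> qclass I ` P \<longleftrightarrow> Q \<subset> P"
  using qclass_image_subset_iff[OF I assms(2), of Q] qclass_image_subset_iff[OF I assms(3), of P]
  by (simp add: less_le_not_le)

lemma height_le_quot_cha:
  assumes I: "cha_ideal I" and P: "P \<in> avoiding_prime_filters I"
  shows "height_le (quot_cha I) (qclass I ` P) n \<longleftrightarrow> height_le full_cha P n"
  using P
proof (induction n arbitrary: P)
  have down: "Q \<in> avoiding_prime_filters I"
    if "P \<in> avoiding_prime_filters I" "Q \<in> Spec full_cha" "Q \<subseteq> P" for P Q
    using that by (auto simp: avoiding_prime_filters_def Spec_full_cha)
  have below: "(\<forall>q\<in>Spec (quot_cha I). q \<subset> qclass I ` P \<longrightarrow> R q)
      \<longleftrightarrow> (\<forall>Q\<in>Spec full_cha. Q \<subset> P \<longrightarrow> R (qclass I ` Q))"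
    if P: "P \<in> avoiding_prime_filters I" for P and R :: "'a set set \<Rightarrow> bool"
  proof -
    have "(\<forall>q\<in>Spec (quot_cha I). q \<subset> qclass I ` P \<longrightarrow> R q)
        \<longleftrightarrow> (\<forall>Q\<in>avoiding_prime_filters I. qclass I ` Q \<subset> qclass I ` P \<longrightarrow> R (qclass I ` Q))"
      by (simp add: Spec_quot_cha[OF I])
    also have "\<dots> \<longleftrightarrow> (\<forall>Q\<in>avoiding_prime_filters I. Q \<subset> P \<longrightarrow> R (qclass I ` Q))"
      by (intro ball_cong refl) (simp add: qclass_image_psubset_iff[OF I P])
    also have "\<dots> \<longleftrightarrow> (\<forall>Q\<in>Spec full_cha. Q \<subset> P \<longrightarrow> R (qclass I ` Q))"
      using down[OF P] unfolding Spec_full_cha avoiding_prime_filters_def by blast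
    finally show ?thesis .
  qed
  {
    case 0
    show ?case using below[OF 0, of "\<lambda>_. False"] by simp
  next
    case (Suc n)
    have "height_le (quot_cha I) (qclass I ` P) (Suc n)
        \<longleftrightarrow> (\<forall>Q\<in>Spec full_cha. Q \<subset> P \<longrightarrow> height_le (quot_cha I) (qclass I ` Q) n)"
      using below[OF Suc.prems] by simp
    also have "\<dots> \<longleftrightarrow> (\<forall>Q\<in>Spec full_cha. Q \<subset> P \<longrightarrow> height_le full_cha Q n)"
      using Suc.IH down[OF Suc.prems] by (intro ball_cong refl) (meson psubset_imp_subset)
    finally show ?case by simp
  }
qed

lemma codim_quot_cha_finite_iff:
  assumes I: "cha_ideal I"
  shows "codim (quot_cha I) (qclass I z) \<noteq> \<infinity>
    \<longleftrightarrow> (\<exists>P\<in>avoiding_prime_filters I. z \<in> P \<and> (\<exists>n. height_le full_cha P n))"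
  unfolding codim_finite_iff Spec_quot_cha[OF I]
proof
  assume "\<exists>p\<in>image (qclass I) ` avoiding_prime_filters I.
    qclass I z \<in> p \<and> (\<exists>n. height_le (quot_cha I) p n)"
  then obtain P n where P: "P \<in> avoiding_prime_filters I" "qclass I z \<in> qclass I ` P"
    "height_le (quot_cha I) (qclass I ` P) n" by blast
  then show "\<exists>P\<in>avoiding_prime_filters I. z \<in> P \<and> (\<exists>n. height_le full_cha P n)"
    using qclass_in_image_iff[OF I P(1)] height_le_quot_cha[OF I P(1)] by blast
next
  assume "\<exists>P\<in>avoiding_prime_filters I. z \<in> P \<and> (\<exists>n. height_le full_cha P n)"
  then obtain P n where P: "P \<in> avoiding_prime_filters I" "z \<in> P" "height_le full_cha P n" by blast
  then show "\<exists>p\<in>image (qclass I) ` avoiding_prime_filters I.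
    qclass I z \<in> p \<and> (\<exists>n. height_le (quot_cha I) p n)"
    using height_le_quot_cha[OF I P(1)] by blast
qed

lemma codim_quot_cha_min_le:
  assumes I: "cha_ideal I" and prime: "\<And>P. is_prime_filter P \<Longrightarrow> c \<in> P \<Longrightarrow> a \<in> P \<or> b \<in> P"
  shows "min (codim (quot_cha I) (qclass I a)) (codim (quot_cha I) (qclass I b))
    \<le> codim (quot_cha I) (qclass I c)"
proof (rule codim_min_le, intro ballI impI)
  fix p assume "p \<in> Spec (quot_cha I)" "qclass I c \<in> p"
  moreover from this(1) obtain P where P: "P \<in> avoiding_prime_filters I" "p = qclass I ` P"
    by (auto simp: Spec_quot_cha[OF I])
  ultimately show "qclass I a \<in> p \<or> qclass I b \<in> p"
    using prime qclass_in_image_iff[OF I P(1)] by (auto simp: avoiding_prime_filters_def)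
qed

lemma codim_Hausdorff_quot_cha_iff:
  assumes I: "cha_ideal I"
  shows "codim_Hausdorff (quot_cha I)
    \<longleftrightarrow> (\<forall>z. z \<notin> I \<longrightarrow> (\<exists>P\<in>avoiding_prime_filters I. z \<in> P \<and> (\<exists>n. height_le full_cha P n)))"
proof (intro iffI allI impI)
  fix z assume H: "codim_Hausdorff (quot_cha I)" and "z \<notin> I"
  then have "qclass I z \<noteq> qclass I \<bottom>" by (simp add: qclass_eq_iff[OF I])
  then have "codim (quot_cha I) (ch_symdiff (quot_cha I) (qclass I z) (qclass I \<bottom>)) \<noteq> \<infinity>"
    using codim_finite_if_Hausdorff[OF H] by (simp add: ch_car_quot_cha)
  then show "\<exists>P\<in>avoiding_prime_filters I. z \<in> P \<and> (\<exists>n. height_le full_cha P n)"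
    unfolding ch_symdiff_quot_cha[OF I] symdiff_bot codim_quot_cha_finite_iff[OF I] .
next
  assume fin: "\<forall>z. z \<notin> I \<longrightarrow> (\<exists>P\<in>avoiding_prime_filters I. z \<in> P \<and> (\<exists>n. height_le full_cha P n))"
  show "codim_Hausdorff (quot_cha I)"
  proof (rule Hausdorff_if_codim_finite)
    fix u assume "u \<in> ch_car (quot_cha I)"
    then obtain x where u: "u = qclass I x" by (auto simp: ch_car_quot_cha)
    have "qclass I \<bottom> \<notin> qclass I ` P" if "P \<in> avoiding_prime_filters I" for P
      using qclass_in_image_iff[OF I that] that prime_filter_bot
      by (auto simp: avoiding_prime_filters_def)
    then have "\<forall>p\<in>Spec (quot_cha I). qclass I \<bottom> \<notin> p" by (simp add: Spec_quot_cha[OF I])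
    then show "codim (quot_cha I) (ch_symdiff (quot_cha I) u u) = \<infinity>"
      by (simp add: u ch_symdiff_quot_cha[OF I] codim_eq_infinity)
  next
    fix u v assume "u \<in> ch_car (quot_cha I)" "v \<in> ch_car (quot_cha I)"
    then obtain x y where "u = qclass I x" "v = qclass I y"
      unfolding ch_car_quot_cha by blast
    then show "codim (quot_cha I) (ch_symdiff (quot_cha I) u v)
        = codim (quot_cha I) (ch_symdiff (quot_cha I) v u)"
      by (simp add: ch_symdiff_quot_cha[OF I] symdiff_commute)
  next
    fix u v w assume "u \<in> ch_car (quot_cha I)" "v \<in> ch_car (quot_cha I)" "w \<in> ch_car (quot_cha I)"
    then obtain x y z where "u = qclass I x" "v = qclass I y" "w = qclass I z"
      unfolding ch_car_quot_cha by blast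
    then show "min (codim (quot_cha I) (ch_symdiff (quot_cha I) u v))
          (codim (quot_cha I) (ch_symdiff (quot_cha I) v w))
        \<le> codim (quot_cha I) (ch_symdiff (quot_cha I) u w)"
      using codim_quot_cha_min_le[OF I prime_filter_symdiff_triangle]
      by (simp add: ch_symdiff_quot_cha[OF I])
  next
    fix u v assume "u \<in> ch_car (quot_cha I)" "v \<in> ch_car (quot_cha I)" "u \<noteq> v"
    then obtain x y where uv: "u = qclass I x" "v = qclass I y" and "symdiff x y \<notin> I"
      unfolding ch_car_quot_cha using qclass_eq_iff[OF I] by blast
    then have "codim (quot_cha I) (qclass I (symdiff x y)) \<noteq> \<infinity>"
      using fin codim_quot_cha_finite_iff[OF I] by blast
    then show "codim (quot_cha I) (ch_symdiff (quot_cha I) u v) \<noteq> \<infinity>"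
      by (simp add: uv ch_symdiff_quot_cha[OF I])
  qed
qed

section \<open>Closed ideals\<close>

lemma codim_Hausdorff_quot_cha_iff_closed:
  fixes I :: "'a::coheyting set"
  assumes I: "cha_ideal I"
  shows "codim_Hausdorff (quot_cha I) \<longleftrightarrow> codim_closed (full_cha :: 'a cha) I"
  unfolding codim_Hausdorff_quot_cha_iff[OF I] codim_closed_full_cha_iff
proof (intro iffI allI impI)
  fix z assume "\<forall>z. z \<notin> I \<longrightarrow> (\<exists>P\<in>avoiding_prime_filters I. z \<in> P \<and> (\<exists>n. height_le full_cha P n))"
    and "z \<notin> I"
  then obtain P n where P: "is_prime_filter P" "P \<inter> I = {}" "z \<in> P" "height_le full_cha P n"
    by (auto simp: avoiding_prime_filters_def)
  have "codim (full_cha :: 'a cha) (symdiff z b) \<le> enat n" if "b \<in> I" for b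
  proof -
    have "z - b \<in> P" using P that prime_filter_diff by blast
    then have "symdiff z b \<in> P" using prime_filter_up[OF P(1) _ diff_le_symdiff] by blast
    then show ?thesis using P by (auto simp: codim_full_cha_le_iff)
  qed
  then show "\<exists>n. \<forall>b\<in>I. codim (full_cha :: 'a cha) (symdiff z b) \<le> enat n" by blast
next
  fix z assume "\<forall>a. a \<notin> I \<longrightarrow> (\<exists>n. \<forall>b\<in>I. codim (full_cha :: 'a cha) (symdiff a b) \<le> enat n)"
    and "z \<notin> I"
  then obtain n where n: "\<forall>b\<in>I. codim (full_cha :: 'a cha) (symdiff z b) \<le> enat n" by blast
  let ?K = "{x::'a. enat n < codim full_cha x}"
  let ?J = "{x. \<exists>i\<in>I. \<exists>k\<in>?K. x \<le> i \<squnion> k}"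
  have "z \<notin> ?J"
  proof
    assume "z \<in> ?J"
    then obtain i k where "i \<in> I" "enat n < codim full_cha k" "z \<le> i \<squnion> k" by blast
    then have "enat n < codim (full_cha :: 'a cha) (z - i)"
      using codim_full_cha_antimono[of "z - i" k] by (simp add: diff_le_iff)
    also have "\<dots> \<le> codim full_cha (symdiff z (z \<sqinter> i))"
      by (rule codim_full_cha_antimono[OF symdiff_inf_le_diff])
    also have "\<dots> \<le> enat n" using n cha_idealD(2)[OF I \<open>i \<in> I\<close> inf_le2] by blast
    finally show False by simp
  qed
  then obtain P where P: "is_prime_filter P" "z \<in> P" "P \<inter> ?J = {}"
    using prime_filter_separation[OF cha_ideal_join[OF I cha_ideal_codim_greater]] by blast
  have "\<bottom> \<in> ?K" using cha_idealD(1)[OF cha_ideal_codim_greater] by blast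
  then have "I \<subseteq> ?J" by force
  with P(3) have "P \<in> avoiding_prime_filters I" using P(1) by (auto simp: avoiding_prime_filters_def)
  have "?K \<subseteq> ?J" using cha_idealD(1)[OF I] by force
  with P(3) have "P \<inter> rank_witness (Suc n) = {}" using codim_greater_rank_witness by blast
  then have "height_le full_cha P n" using height_le_full_cha_iff[OF P(1)] by blast
  with P(2) \<open>P \<in> avoiding_prime_filters I\<close>
  show "\<exists>P\<in>avoiding_prime_filters I. z \<in> P \<and> (\<exists>n. height_le full_cha P n)" by blast
qed

lemma codim_closed_principal_ideal:
  assumes "codim_Hausdorff (full_cha :: 'a::coheyting cha)"
  shows "codim_closed (full_cha :: 'a cha) {x. x \<le> a}"
  unfolding codim_closed_full_cha_iff
proof (intro allI impI)
  fix y assume "y \<notin> {x. x \<le> a}"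
  then have "y - a \<noteq> \<bottom>" by (metis diff_le_iff mem_Collect_eq order_refl sup_bot_right)
  then have "codim (full_cha :: 'a cha) (y - a) \<noteq> \<infinity>"
    using codim_finite_if_Hausdorff[OF assms, of "y - a" \<bottom>] by simp
  then obtain n where n: "codim (full_cha :: 'a cha) (y - a) \<le> enat n"
    by (cases "codim (full_cha :: 'a cha) (y - a)") auto
  have "codim (full_cha :: 'a cha) (symdiff y b) \<le> enat n" if "b \<le> a" for b
  proof -
    have "y - a \<le> symdiff y b"
      using diff_antimono_right[OF that] diff_le_symdiff by (rule order_trans)
    then show ?thesis using n by (metis codim_full_cha_antimono order_trans)
  qed
  then show "\<exists>n. \<forall>b\<in>{x. x \<le> a}. codim (full_cha :: 'a cha) (symdiff y b) \<le> enat n" by blast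
qed

theorem proposition4p4:
  fixes I :: "'a::coheyting set"
  assumes "codim_Hausdorff (full_cha :: 'a cha)"
    and "cha_ideal I"
  shows "(codim_Hausdorff (quot_cha I) \<longleftrightarrow> codim_closed (full_cha :: 'a cha) I)
         \<and> (\<forall>a::'a. codim_Hausdorff (quot_cha {x. x \<le> a}))"
  using codim_Hausdorff_quot_cha_iff_closed[OF assms(2)]
    codim_Hausdorff_quot_cha_iff_closed[OF cha_ideal_principal]
    codim_closed_principal_ideal[OF assms(1)]
  by blast

end
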